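(* Fix $\alpha\in[0,1)$. Let $M=(r,q,u)$ be a floor-randomized, left-continuous mechanism satisfying DD. If $M$ is dominated, then there exists a floor-randomized, left-continuous mechanism $M'=(r',q',u')$ satisfying DD that dominates $M$ and satisfies $q'(\theta)r'(\theta)\le q(\theta)r(\theta)$ for all $\theta\in\Theta$.
   Context: Setting. Let $\Theta=[\underline\theta,\overline\theta]$ with $0<\underline\theta<\overline\theta$. Let $c>0$ and let $P:\mathbb R_+\to\mathbb R_+$ be continuous and strictly decreasing with $P(\overline q)=0$ for some $\overline q>0$. Put $V(q)=\int_0^q P(z)\,dz$ and $\mathrm{TS}(\theta,q)=V(q)-c-\theta q$ for $q>0$, $\mathrm{TS}(\theta,0)=0$. Assume (A2): $\mathrm{TS}(\overline\theta,P^{-1}(\overline\theta))>0$. A mechanism is a triple $M=(r,q,u)$ of functions $r:\Theta\to[0,1]$, $q:\Theta\to[0,\overline q]$, $u:\Theta\to\mathbb R$ with $q(\theta)=0$ if and only if $r(\theta)=0$. It is IC if $u(\theta)\ge u(\theta')+(\theta'-\theta)q(\theta')r(\theta')$ for all $\theta,\theta'\in\Theta$, and IR if $u(\theta)\ge 0$ for all $\theta$. (Known fact: $M$ is IC iff $\theta\mapsto q(\theta)r(\theta)$ is nonincreasing and $u(\theta)=u(\overline\theta)+\int_\theta^{\overline\theta}q(z)r(z)\,dz$ for all $\theta$; an IC mechanism is IR iff $u(\overline\theta)\ge0$.) Fix $\alpha\in[0,1)$. The regulator's surplus at $\theta$ is $\mathrm{RS}_\alpha(\theta,M)=r(\theta)\,\mathrm{TS}(\theta,q(\theta))-(1-\alpha)u(\theta)$.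 An IC and IR mechanism $\tilde M$ dominates an IC and IR mechanism $M$ if $\mathrm{RS}_\alpha(\theta,\tilde M)\ge \mathrm{RS}_\alpha(\theta,M)$ for all $\theta\in\Theta$ with strict inequality for some $\theta$; $M$ is undominated if it is IC, IR and not dominated by any IC and IR mechanism. The quantity floor $\hat q$ is the unique $q>0$ with $V(q)-qP(q)=c$. A mechanism $(r,q,u)$ is floor-randomized if it is IC, IR, $u(\overline\theta)=0$, and $\Theta$ can be partitioned into three pairwise disjoint (possibly empty) intervals $\Theta_1,\Theta_{01},\Theta_0$, with every element of $\Theta_0$ larger than every element of $\Theta_{01}$ and every element of $\Theta_{01}$ larger than every element of $\Theta_1$, such that: $q(\theta)\ge\hat q$ and $r(\theta)=1$ for $\theta\in\Theta_1$; $q(\theta)=\hat q$ and $r(\theta)\in(0,1)$ for $\theta\in\Theta_{01}$; $q(\theta)=r(\theta)=0$ for $\theta\in\Theta_0$. The efficient quantity is $q_e(\theta)=P^{-1}(\theta)$. A mechanism satisfies downward distortion (DD) if $q(\theta)\le q_e(\theta)$ for all $\theta$, with equality at $\theta=\underline\theta$. A mechanism is left continuous if $\theta\mapsto q(\theta)r(\theta)$ is left continuous at every $\theta\in(\underline\theta,\overline\theta]$. *)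

theory Defs
  imports "HOL-Analysis.Analysis"
begin

text \<open>Type of parameters: \<Theta> = {tlo..thi}. Mechanisms are triples of real functions,
 only their values on \<Theta> matter.\<close>

definition V :: "(real \<Rightarrow> real) \<Rightarrow> real \<Rightarrow> real" where
  "V P q = integral {0..q} P"

definition TS :: "(real \<Rightarrow> real) \<Rightarrow> real \<Rightarrow> real \<Rightarrow> real \<Rightarrow> real" where
  "TS P c \<theta> q = (if q = 0 then 0 else V P q - c - \<theta> * q)"

definition qfloor :: "(real \<Rightarrow> real) \<Rightarrow> real \<Rightarrow> real" where
  "qfloor P c = (THE q. q > 0 \<and> V P q - q * P q = c)"

definition qeff :: "(real \<Rightarrow> real) \<Rightarrow> real \<Rightarrow> real" where
  "qeff P \<theta> = (THE q. q \<ge> 0 \<and> P q = \<theta>)"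

definition mechanism ::
  "real \<Rightarrow> real \<Rightarrow> real \<Rightarrow> (real \<Rightarrow> real) \<Rightarrow> (real \<Rightarrow> real) \<Rightarrow> (real \<Rightarrow> real) \<Rightarrow> bool" where
  "mechanism tlo thi qbar r q u \<longleftrightarrow>
     (\<forall>\<theta>\<in>{tlo..thi}. 0 \<le> r \<theta> \<and> r \<theta> \<le> 1 \<and> 0 \<le> q \<theta> \<and> q \<theta> \<le> qbar
                    \<and> (q \<theta> = 0 \<longleftrightarrow> r \<theta> = 0))"

definition IC :: "real \<Rightarrow> real \<Rightarrow> (real \<Rightarrow> real) \<Rightarrow> (real \<Rightarrow> real) \<Rightarrow> (real \<Rightarrow> real) \<Rightarrow> bool" where
  "IC tlo thi r q u \<longleftrightarrow>
     (\<forall>\<theta>\<in>{tlo..thi}. \<forall>\<theta>'\<in>{tlo..thi}. u \<theta> \<ge> u \<theta>' + (\<theta>' - \<theta>) * q \<theta>' * r \<theta>')"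

definition IR :: "real \<Rightarrow> real \<Rightarrow> (real \<Rightarrow> real) \<Rightarrow> bool" where
  "IR tlo thi u \<longleftrightarrow> (\<forall>\<theta>\<in>{tlo..thi}. u \<theta> \<ge> 0)"

definition feasible ::
  "real \<Rightarrow> real \<Rightarrow> real \<Rightarrow> (real \<Rightarrow> real) \<Rightarrow> (real \<Rightarrow> real) \<Rightarrow> (real \<Rightarrow> real) \<Rightarrow> bool" where
  "feasible tlo thi qbar r q u \<longleftrightarrow>
     mechanism tlo thi qbar r q u \<and> IC tlo thi r q u \<and> IR tlo thi u"

definition RS ::
  "(real \<Rightarrow> real) \<Rightarrow> real \<Rightarrow> real \<Rightarrow> real \<Rightarrow> (real \<Rightarrow> real) \<Rightarrow> (real \<Rightarrow> real) \<Rightarrow> (real \<Rightarrow> real) \<Rightarrow> real" where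
  "RS P c \<alpha> \<theta> r q u = r \<theta> * TS P c \<theta> (q \<theta>) - (1 - \<alpha>) * u \<theta>"

definition dominates ::
  "real \<Rightarrow> real \<Rightarrow> real \<Rightarrow> (real \<Rightarrow> real) \<Rightarrow> real \<Rightarrow> real \<Rightarrow>
   (real \<Rightarrow> real) \<Rightarrow> (real \<Rightarrow> real) \<Rightarrow> (real \<Rightarrow> real) \<Rightarrow>
   (real \<Rightarrow> real) \<Rightarrow> (real \<Rightarrow> real) \<Rightarrow> (real \<Rightarrow> real) \<Rightarrow> bool" where
  "dominates tlo thi qbar P c \<alpha> r' q' u' r q u \<longleftrightarrow>
     feasible tlo thi qbar r' q' u' \<and> feasible tlo thi qbar r q u \<and>
     (\<forall>\<theta>\<in>{tlo..thi}. RS P c \<alpha> \<theta> r' q' u' \<ge> RS P c \<alpha> \<theta> r q u) \<and>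
     (\<exists>\<theta>\<in>{tlo..thi}. RS P c \<alpha> \<theta> r' q' u' > RS P c \<alpha> \<theta> r q u)"

definition dominated ::
  "real \<Rightarrow> real \<Rightarrow> real \<Rightarrow> (real \<Rightarrow> real) \<Rightarrow> real \<Rightarrow> real \<Rightarrow>
   (real \<Rightarrow> real) \<Rightarrow> (real \<Rightarrow> real) \<Rightarrow> (real \<Rightarrow> real) \<Rightarrow> bool" where
  "dominated tlo thi qbar P c \<alpha> r q u \<longleftrightarrow>
     (\<exists>r' q' u'. dominates tlo thi qbar P c \<alpha> r' q' u' r q u)"

definition interval_set :: "real set \<Rightarrow> bool" where
  "interval_set S \<longleftrightarrow> (\<forall>x\<in>S. \<forall>y\<in>S. \<forall>z. x \<le> z \<and> z \<le> y \<longrightarrow> z \<in> S)"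

definition floor_randomized ::
  "real \<Rightarrow> real \<Rightarrow> real \<Rightarrow> (real \<Rightarrow> real) \<Rightarrow> real \<Rightarrow>
   (real \<Rightarrow> real) \<Rightarrow> (real \<Rightarrow> real) \<Rightarrow> (real \<Rightarrow> real) \<Rightarrow> bool" where
  "floor_randomized tlo thi qbar P c r q u \<longleftrightarrow>
     feasible tlo thi qbar r q u \<and> u thi = 0 \<and>
     (\<exists>T1 T01 T0.
        interval_set T1 \<and> interval_set T01 \<and> interval_set T0 \<and>
        T1 \<inter> T01 = {} \<and> T1 \<inter> T0 = {} \<and> T01 \<inter> T0 = {} \<and>
        T1 \<union> T01 \<union> T0 = {tlo..thi} \<and>
        (\<forall>x\<in>T0. \<forall>y\<in>T01. x > y) \<and> (\<forall>x\<in>T01. \<forall>y\<in>T1. x > y) \<and>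
        (\<forall>\<theta>\<in>T1. q \<theta> \<ge> qfloor P c \<and> r \<theta> = 1) \<and>
        (\<forall>\<theta>\<in>T01. q \<theta> = qfloor P c \<and> 0 < r \<theta> \<and> r \<theta> < 1) \<and>
        (\<forall>\<theta>\<in>T0. q \<theta> = 0 \<and> r \<theta> = 0))"

definition DD :: "real \<Rightarrow> real \<Rightarrow> (real \<Rightarrow> real) \<Rightarrow> (real \<Rightarrow> real) \<Rightarrow> bool" where
  "DD tlo thi P q \<longleftrightarrow> (\<forall>\<theta>\<in>{tlo..thi}. q \<theta> \<le> qeff P \<theta>) \<and> q tlo = qeff P tlo"

definition left_continuous ::
  "real \<Rightarrow> real \<Rightarrow> (real \<Rightarrow> real) \<Rightarrow> (real \<Rightarrow> real) \<Rightarrow> bool" where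
  "left_continuous tlo thi r q \<longleftrightarrow>
     (\<forall>\<theta>\<in>{tlo<..thi}. continuous (at_left \<theta>) (\<lambda>x. q x * r x))"

end

theory Submission
  imports Defs
begin

text \<open>Write z = q r for the expected quantity. Below the floor qhat, V - c is replaced by its
  tangent line through the origin, giving a function H with r TS(\<theta>, q) \<le> H(z) - \<theta> z for
  every feasible pair (r, q), with equality for the pairs a floor-randomized mechanism uses. So
  the regulator's surplus is bounded by H(z) - \<theta> z - (1 - \<alpha>) u, with equality for
  floor-randomized mechanisms, whose rent is u(\<theta>) = \<integral> z over [\<theta>, thi].

  Given M dominated by M1 with expected quantity y, let L(\<theta>) = inf y on [tlo, \<theta>): it is
  left-continuous and nonincreasing, L \<ge> y, and its integrals are still bounded by the rents
  of M1. Implement the schedule min(z, L) as a floor-randomized mechanism M'. Where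
  min(z, L) = z, M' pays lower rents than M; where it equals L, the domination inequality passes
  to the left limit. If M' gained nowhere, comparing at tlo forces z, L and min(z, L) to have
  equal integrals; by left continuity then L \<le> z, and M1 could not gain anywhere either.\<close>

section \<open>Integrals over real intervals\<close>

lemma antimono_on_integrable:
  fixes f :: "real \<Rightarrow> real"
  assumes "antimono_on {a..b} f"
  shows "f integrable_on {a..b}"
proof -
  have "mono_on {a..b} (\<lambda>x. - f x)"
    using assms by (auto simp: monotone_on_def)
  then show ?thesis
    using integrable_on_mono_on integrable_neg by fastforce
qed

lemma antimono_on_integrable_subinterval:
  fixes f :: "real \<Rightarrow> real"
  assumes "antimono_on {a..b} f" "a \<le> s" "t \<le> b"
  shows "f integrable_on {s..t}"
  by (intro antimono_on_integrable monotone_on_subset[OF assms(1)]) (use assms in auto)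

lemma antimono_on_integral_bounds:
  fixes f :: "real \<Rightarrow> real"
  assumes f: "antimono_on {a..b} f" and st: "a \<le> s" "s \<le> t" "t \<le> b"
  shows "(t - s) * f t \<le> integral {s..t} f" and "integral {s..t} f \<le> (t - s) * f s"
proof -
  have f_int: "f integrable_on {s..t}"
    using antimono_on_integrable_subinterval[OF f] st by simp
  have between: "f t \<le> f w" "f w \<le> f s" if "w \<in> {s..t}" for w
    using f st that by (auto simp: monotone_on_def)
  have "integral {s..t} (\<lambda>_. f t) \<le> integral {s..t} f"
    by (rule integral_le) (use f_int between in auto)
  moreover have "integral {s..t} f \<le> integral {s..t} (\<lambda>_. f s)"
    by (rule integral_le) (use f_int between in auto)
  ultimately show "(t - s) * f t \<le> integral {s..t} f" and "integral {s..t} f \<le> (t - s) * f s"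
    using st by auto
qed

lemma integral_subinterval_le:
  fixes f :: "real \<Rightarrow> real"
  assumes f: "f integrable_on {a..b}" and nonneg: "\<And>x. x \<in> {a..b} \<Longrightarrow> 0 \<le> f x"
    and st: "a \<le> s" "s \<le> t" "t \<le> b"
  shows "integral {s..t} f \<le> integral {a..b} f"
proof -
  have f_sub: "f integrable_on {v..w}" if "a \<le> v" "w \<le> b" for v w
    using integrable_subinterval_real[OF f] that by auto
  have "integral {a..s} f + integral {s..t} f = integral {a..t} f"
    using st f_sub by (intro Henstock_Kurzweil_Integration.integral_combine) auto
  moreover have "integral {a..t} f + integral {t..b} f = integral {a..b} f"
    using st f by (intro Henstock_Kurzweil_Integration.integral_combine) auto
  moreover have "0 \<le> integral {a..s} f" "0 \<le> integral {t..b} f"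
    using st f_sub nonneg by (auto intro!: integral_nonneg)
  ultimately show ?thesis
    by linarith
qed

text \<open>Subdividing [p, q] into n equal steps telescopes the variation of g, so
  \<bar>F q - F p\<bar> \<le> (q - p) (g p - g q) / n for every n.\<close>
lemma const_if_increments_bounded:
  fixes F g :: "real \<Rightarrow> real"
  assumes pq: "p \<le> q"
    and bound: "\<And>s t. p \<le> s \<Longrightarrow> s \<le> t \<Longrightarrow> t \<le> q \<Longrightarrow> \<bar>F t - F s\<bar> \<le> (t - s) * (g s - g t)"
  shows "F q = F p"
proof (rule ccontr)
  assume "F q \<noteq> F p"
  then have diff_pos: "\<bar>F q - F p\<bar> > 0"
    by simp
  obtain n :: nat where n: "(q - p) * (g p - g q) / \<bar>F q - F p\<bar> < real n"
    using reals_Archimedean2 by blast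
  have "0 \<le> (q - p) * (g p - g q)"
    using bound[of p q] pq by auto
  then have n_pos: "0 < real n"
    using n diff_pos by (smt (verit) divide_nonneg_pos)
  define h where "h = (q - p) / real n"
  have h_nonneg: "0 \<le> h" and nh: "real n * h = q - p"
    using pq n_pos by (auto simp: h_def)
  have steps: "\<bar>F (p + real k * h) - F p\<bar> \<le> h * (g p - g (p + real k * h))" if "k \<le> n" for k
    using that
  proof (induction k)
    case (Suc k)
    let ?s = "p + real k * h" and ?t = "p + real (Suc k) * h"
    have "real (Suc k) * h \<le> real n * h"
      using Suc.prems h_nonneg by (intro mult_right_mono) auto
    then have "\<bar>F ?t - F ?s\<bar> \<le> (?t - ?s) * (g ?s - g ?t)"
      using nh h_nonneg by (intro bound) (auto simp: algebra_simps)
    moreover have "?t - ?s = h"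
      by (simp add: algebra_simps)
    ultimately show ?case
      using Suc by (simp add: algebra_simps abs_le_iff)
  qed simp
  have "\<bar>F q - F p\<bar> * real n \<le> h * (g p - g q) * real n"
    using steps[of n] nh n_pos by (intro mult_right_mono) auto
  also have "\<dots> = (real n * h) * (g p - g q)"
    by (simp add: algebra_simps)
  also have "\<dots> = (q - p) * (g p - g q)"
    using nh by simp
  also have "\<dots> < real n * \<bar>F q - F p\<bar>"
    using n diff_pos by (simp add: divide_less_eq)
  finally show False
    by (simp add: mult.commute)
qed

lemma diff_eq_integral_if_sandwiched:
  fixes w f g :: "real \<Rightarrow> real"
  assumes pq: "p \<le> q" and f: "f integrable_on {p..q}"
    and w_bounds: "\<And>s t. p \<le> s \<Longrightarrow> s \<le> t \<Longrightarrow> t \<le> q \<Longrightarrow>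
      (t - s) * g t \<le> w s - w t \<and> w s - w t \<le> (t - s) * g s"
    and f_bounds: "\<And>s t. p \<le> s \<Longrightarrow> s \<le> t \<Longrightarrow> t \<le> q \<Longrightarrow>
      (t - s) * g t \<le> integral {s..t} f \<and> integral {s..t} f \<le> (t - s) * g s"
  shows "w p - w q = integral {p..q} f"
proof -
  define F where "F x = w x + integral {p..x} f" for x
  have "F q = F p"
  proof (rule const_if_increments_bounded[OF pq, where g = g])
    fix s t assume st: "p \<le> s" "s \<le> t" "t \<le> q"
    have "integral {p..s} f + integral {s..t} f = integral {p..t} f"
      using st integrable_subinterval_real[OF f, of p t]
      by (intro Henstock_Kurzweil_Integration.integral_combine) auto
    then have "F t - F s = integral {s..t} f - (w s - w t)"
      by (simp add: F_def)
    moreover have "(t - s) * (g s - g t) = (t - s) * g s - (t - s) * g t"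
      by (simp add: algebra_simps)
    ultimately show "\<bar>F t - F s\<bar> \<le> (t - s) * (g s - g t)"
      using w_bounds[OF st] f_bounds[OF st] by (simp add: abs_le_iff)
  qed
  then show ?thesis
    by (simp add: F_def)
qed

lemma zero_if_integral_zero_left_continuous:
  fixes f :: "real \<Rightarrow> real"
  assumes f: "f integrable_on {a..b}" and nonneg: "\<And>x. x \<in> {a..b} \<Longrightarrow> 0 \<le> f x"
    and zero: "integral {a..b} f = 0"
    and t: "a < t" "t \<le> b" and left_cont: "(f \<longlongrightarrow> f t) (at_left t)"
  shows "f t = 0"
proof (rule ccontr)
  assume "f t \<noteq> 0"
  moreover have "0 \<le> f t"
    using nonneg t by simp
  ultimately have pos: "0 < f t / 2" "f t / 2 < f t"
    by simp_all
  have "\<forall>\<^sub>F x in at_left t. f t / 2 < f x"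
    using left_cont pos(2) by (rule order_tendstoD)
  then obtain s0 where s0: "s0 < t" "\<And>x. s0 < x \<Longrightarrow> x < t \<Longrightarrow> f t / 2 < f x"
    unfolding eventually_at_left_field by blast
  define s where "s = max ((s0 + t) / 2) a"
  have s: "a \<le> s" "s < t" "s0 < s"
    using s0 t by (auto simp: s_def less_max_iff_disj)
  have "f t / 2 \<le> f x" if "x \<in> {s..t}" for x
    using that s s0(2)[of x] pos by (cases "x = t") auto
  then have "integral {s..t} (\<lambda>_. f t / 2) \<le> integral {s..t} f"
    using s t integrable_subinterval_real[OF f, of s t] by (intro integral_le) auto
  also have "\<dots> \<le> 0"
    using integral_subinterval_le[OF f nonneg] s t zero by fastforce
  finally show False
    using s pos by (simp add: mult_le_0_iff)
qed

section \<open>Incentive compatibility\<close>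

lemma IC_bounds:
  assumes "IC a b r q u" "a \<le> s" "s \<le> t" "t \<le> b"
  shows "(t - s) * (q t * r t) \<le> u s - u t" and "u s - u t \<le> (t - s) * (q s * r s)"
proof -
  have "u t + (t - s) * q t * r t \<le> u s" "u s + (s - t) * q s * r s \<le> u t"
    using assms unfolding IC_def by auto
  then show "(t - s) * (q t * r t) \<le> u s - u t" and "u s - u t \<le> (t - s) * (q s * r s)"
    by (simp_all add: algebra_simps)
qed

lemma IC_antimono:
  assumes "IC a b r q u"
  shows "antimono_on {a..b} (\<lambda>t. q t * r t)"
proof (rule monotone_onI)
  fix s t assume "s \<in> {a..b}" "t \<in> {a..b}" "s \<le> t"
  then have "(t - s) * (q t * r t) \<le> (t - s) * (q s * r s)"
    using IC_bounds[OF assms, of s t] by auto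
  then show "q t * r t \<le> q s * r s"
    using \<open>s \<le> t\<close> by (cases "s = t") (auto simp: mult_le_cancel_left)
qed

lemma mechanism_expected_quantity_bounds:
  assumes "mechanism a b qbar r q u" "t \<in> {a..b}"
  shows "0 \<le> q t * r t" "q t * r t \<le> q t" "q t \<le> qbar"
  using assms unfolding mechanism_def by (auto simp: mult_left_le)

lemma IC_tendsto_left:
  assumes IC: "IC a b r q u" and mech: "mechanism a b qbar r q u" and t: "a < t" "t \<le> b"
  shows "(u \<longlongrightarrow> u t) (at_left t)"
proof (rule tendsto_sandwich[where f = "\<lambda>_. u t" and h = "\<lambda>s. u t + (t - s) * qbar"])
  have "u t \<le> u s \<and> u s \<le> u t + (t - s) * qbar" if s: "s \<in> {a<..<t}" for s
  proof -
    have "0 \<le> q t * r t"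
      using mechanism_expected_quantity_bounds(1)[OF mech, of t] t by auto
    then have "0 \<le> (t - s) * (q t * r t)"
      using s by simp
    moreover have "q s * r s \<le> qbar"
      using mechanism_expected_quantity_bounds(2,3)[OF mech, of s] s t by auto
    then have "(t - s) * (q s * r s) \<le> (t - s) * qbar"
      using s by (intro mult_left_mono) auto
    moreover have "(t - s) * (q t * r t) \<le> u s - u t" "u s - u t \<le> (t - s) * (q s * r s)"
      using IC_bounds[OF IC, of s t] s t by auto
    ultimately show ?thesis
      by linarith
  qed
  then show "\<forall>\<^sub>F s in at_left t. u t \<le> u s" "\<forall>\<^sub>F s in at_left t. u s \<le> u t + (t - s) * qbar"
    using eventually_at_leftI[of a t] t by auto
  show "((\<lambda>_. u t) \<longlongrightarrow> u t) (at_left t)"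
    by simp
  have "((\<lambda>s. u t + (t - s) * qbar) \<longlongrightarrow> u t + (t - t) * qbar) (at_left t)"
    by (intro tendsto_intros)
  then show "((\<lambda>s. u t + (t - s) * qbar) \<longlongrightarrow> u t) (at_left t)"
    by simp
qed

text \<open>Allowing any f sandwiched like q r lets the rent of a mechanism be written as the
  integral of the left-continuous regularization of its q r.\<close>
lemma IC_rent_eq_integral:
  assumes IC: "IC a b r q u" and t: "a \<le> t" "t \<le> b" and f: "f integrable_on {t..b}"
    and f_bounds: "\<And>s s'. t \<le> s \<Longrightarrow> s \<le> s' \<Longrightarrow> s' \<le> b \<Longrightarrow>
      (s' - s) * (q s' * r s') \<le> integral {s..s'} f \<and> integral {s..s'} f \<le> (s' - s) * (q s * r s)"
  shows "u t - u b = integral {t..b} f"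
  by (rule diff_eq_integral_if_sandwiched[OF t(2) f _ f_bounds])
    (use IC_bounds[OF IC] t in fastforce)

lemma IC_rent_eq_integral_expected_quantity:
  assumes IC: "IC a b r q u" and t: "a \<le> t" "t \<le> b"
  shows "u t - u b = integral {t..b} (\<lambda>s. q s * r s)"
  using IC t IC_antimono[OF IC]
  by (intro IC_rent_eq_integral antimono_on_integrable_subinterval) (auto intro: antimono_on_integral_bounds)

section \<open>Left-continuous regularization\<close>

text \<open>Inf over the empty set is junk, so the value v at the left endpoint is supplied separately.\<close>
definition left_regularization :: "(real \<Rightarrow> real) \<Rightarrow> real \<Rightarrow> real \<Rightarrow> real \<Rightarrow> real" where
  "left_regularization y a v t = (if t \<le> a then v else Inf (y ` {a..<t}))"

context
  fixes y :: "real \<Rightarrow> real" and a b v :: real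
  assumes y_antimono: "antimono_on {a..b} y" and y_a_le: "y a \<le> v"
begin

private lemma left_bdd_below:
  assumes "t \<le> b"
  shows "bdd_below (y ` {a..<t})"
proof (rule bdd_belowI)
  fix z assume "z \<in> y ` {a..<t}"
  then show "y b \<le> z"
    using y_antimono assms by (auto simp: monotone_on_def)
qed

lemma le_left_regularization:
  assumes "t \<in> {a..b}"
  shows "y t \<le> left_regularization y a v t"
proof (cases "t \<le> a")
  case True
  then show ?thesis
    using assms y_a_le by (simp add: left_regularization_def)
next
  case False
  have "y t \<le> Inf (y ` {a..<t})"
    using False assms y_antimono by (intro cInf_greatest) (auto simp: monotone_on_def)
  then show ?thesis
    using False by (simp add: left_regularization_def)
qed

lemma left_regularization_le:
  assumes "a \<le> s" "s < t" "t \<le> b"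
  shows "left_regularization y a v t \<le> y s"
proof -
  have "Inf (y ` {a..<t}) \<le> y s"
    using assms left_bdd_below by (intro cInf_lower) auto
  then show ?thesis
    using assms by (simp add: left_regularization_def)
qed

lemma left_regularization_antimono: "antimono_on {a..b} (left_regularization y a v)"
proof (rule monotone_onI)
  fix s t assume st: "s \<in> {a..b}" "t \<in> {a..b}" "s \<le> t"
  show "left_regularization y a v t \<le> left_regularization y a v s"
  proof (cases "s = t \<or> s \<le> a")
    case True
    then consider "s = t" | "s = a" "a < t"
      using st by fastforce
    then show ?thesis
    proof cases
      case 2
      then show ?thesis
        using st le_left_regularization[of a] left_regularization_le[of a t] by auto
    qed simp
  next
    case False
    have "left_regularization y a v t \<le> Inf (y ` {a..<s})"
      using False st left_regularization_le by (intro cInf_greatest) auto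
    then show ?thesis
      using False by (simp add: left_regularization_def)
  qed
qed

lemma tendsto_left_regularization:
  assumes t: "a < t" "t \<le> b"
  shows "(y \<longlongrightarrow> left_regularization y a v t) (at_left t)"
    and "(left_regularization y a v \<longlongrightarrow> left_regularization y a v t) (at_left t)"
proof -
  let ?L = "left_regularization y a v"
  have left: "\<forall>\<^sub>F s in at_left t. s \<in> {a<..<t}"
    using t by (intro eventually_at_leftI) auto
  have y_above: "?L t \<le> y s" and L_above: "?L t \<le> ?L s" if "s \<in> {a<..<t}" for s
    using that t left_regularization_le[of s t] monotone_onD[OF left_regularization_antimono, of s t]
    by auto
  have y_upper: "\<forall>\<^sub>F s in at_left t. y s < z" and L_upper: "\<forall>\<^sub>F s in at_left t. ?L s < z"
    if z: "?L t < z" for z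
  proof -
    have "Inf (y ` {a..<t}) < z"
      using z t by (simp add: left_regularization_def)
    then obtain s0 where s0: "a \<le> s0" "s0 < t" "y s0 < z"
      using cInf_less_iff[OF _ left_bdd_below[OF t(2)]] t by auto
    have "y s < z" "?L s < z" if s: "s \<in> {s0<..<t}" for s
    proof -
      have "y s \<le> y s0"
        using s s0 t monotone_onD[OF y_antimono, of s0 s] by auto
      moreover have "?L s \<le> y s0"
        using s s0 t left_regularization_le[of s0 s] by auto
      ultimately show "y s < z" "?L s < z"
        using s0 by auto
    qed
    then show "\<forall>\<^sub>F s in at_left t. y s < z" "\<forall>\<^sub>F s in at_left t. ?L s < z"
      by (blast intro: eventually_at_leftI[OF _ s0(2)])+
  qed
  have y_lower: "\<forall>\<^sub>F s in at_left t. z < y s" and L_lower: "\<forall>\<^sub>F s in at_left t. z < ?L s"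
    if "z < ?L t" for z
  proof -
    show "\<forall>\<^sub>F s in at_left t. z < y s"
      using left by eventually_elim (use that y_above in fastforce)
    show "\<forall>\<^sub>F s in at_left t. z < ?L s"
      using left by eventually_elim (use that L_above in fastforce)
  qed
  show "(y \<longlongrightarrow> ?L t) (at_left t)"
    by (rule order_tendstoI) (fact y_lower y_upper)+
  show "(?L \<longlongrightarrow> ?L t) (at_left t)"
    by (rule order_tendstoI) (fact L_lower L_upper)+
qed

lemma left_regularization_integral_bounds:
  assumes st: "a \<le> s" "s \<le> t" "t \<le> b"
  shows "(t - s) * y t \<le> integral {s..t} (left_regularization y a v)"
    and "integral {s..t} (left_regularization y a v) \<le> (t - s) * y s"
proof -
  let ?L = "left_regularization y a v"
  have L_int: "?L integrable_on {s..t}"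
    using antimono_on_integrable_subinterval[OF left_regularization_antimono] st by simp
  have "integral {s..t} (\<lambda>_. y t) \<le> integral {s..t} ?L"
  proof (rule integral_le)
    fix w assume "w \<in> {s..t}"
    then show "y t \<le> ?L w"
      using st monotone_onD[OF y_antimono, of w t] le_left_regularization[of w] by auto
  qed (use L_int in auto)
  then show "(t - s) * y t \<le> integral {s..t} ?L"
    using st by simp
  text \<open>?L may exceed y at the left endpoint s, so compare after changing it there.\<close>
  let ?L' = "?L(s := y s)"
  have "integral {s..t} ?L = integral {s..t} ?L'"
    by (rule integral_spike[of "{s}"]) simp_all
  also have "\<dots> \<le> integral {s..t} (\<lambda>_. y s)"
  proof (rule integral_le)
    show "?L' integrable_on {s..t}"
      by (rule integrable_spike[OF L_int negligible_sing[of s]]) simp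
  next
    fix w assume "w \<in> {s..t}"
    then show "?L' w \<le> y s"
      using left_regularization_le[of s w] st by auto
  qed (rule integrable_const_ivl)
  finally show "integral {s..t} ?L \<le> (t - s) * y s"
    using st by simp
qed

end

section \<open>Demand and the surplus envelope\<close>

locale demand =
  fixes P :: "real \<Rightarrow> real" and c qbar :: real
  assumes P_continuous: "continuous_on {0..} P"
    and P_strict_antimono: "strict_antimono_on {0..} P"
    and qbar_pos: "0 < qbar" and P_qbar: "P qbar = 0" and c_pos: "0 < c"
begin

lemma P_less: "0 \<le> s \<Longrightarrow> s < t \<Longrightarrow> P t < P s"
  using P_strict_antimono unfolding monotone_on_def by auto

lemma P_le: "0 \<le> s \<Longrightarrow> s \<le> t \<Longrightarrow> P t \<le> P s"
  using P_less[of s t] by (cases "s = t") auto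

lemma P_integrable: "0 \<le> z \<Longrightarrow> P integrable_on {z..w}"
  by (rule integrable_continuous_interval) (rule continuous_on_subset[OF P_continuous], auto)

lemma V_0: "V P 0 = 0"
  by (simp add: V_def)

lemma V_diff: "0 \<le> z \<Longrightarrow> z \<le> w \<Longrightarrow> V P w - V P z = integral {z..w} P"
  unfolding V_def using Henstock_Kurzweil_Integration.integral_combine[of 0 z w P] P_integrable[of 0 w]
  by auto

lemma V_diff_le: "0 \<le> z \<Longrightarrow> z \<le> w \<Longrightarrow> V P w - V P z \<le> (w - z) * P z"
proof -
  assume zw: "0 \<le> z" "z \<le> w"
  have "integral {z..w} P \<le> integral {z..w} (\<lambda>_. P z)"
    by (rule integral_le) (use zw P_integrable P_le in auto)
  then show ?thesis
    using V_diff[OF zw] zw by simp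
qed

lemma V_diff_ge: "0 \<le> z \<Longrightarrow> z \<le> w \<Longrightarrow> (w - z) * P w \<le> V P w - V P z"
proof -
  assume zw: "0 \<le> z" "z \<le> w"
  have "integral {z..w} (\<lambda>_. P w) \<le> integral {z..w} P"
    by (rule integral_le) (use zw P_integrable P_le in auto)
  then show ?thesis
    using V_diff[OF zw] zw by simp
qed

lemma V_continuous_on: "continuous_on {0..B} (V P)"
  unfolding V_def[abs_def] by (rule indefinite_integral_continuous_1) (rule P_integrable, simp)

lemma qeff_inverse:
  assumes "0 < \<theta>" "\<theta> \<le> P 0"
  shows "0 \<le> qeff P \<theta>" "qeff P \<theta> \<le> qbar" "P (qeff P \<theta>) = \<theta>"
proof -
  have "continuous_on {0..qbar} P"
    by (rule continuous_on_subset[OF P_continuous]) auto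
  then obtain q where q: "0 \<le> q" "q \<le> qbar" "P q = \<theta>"
    using IVT2'[of P qbar \<theta> 0] assms qbar_pos P_qbar by auto
  have "qeff P \<theta> = q"
    unfolding qeff_def
  proof (rule the_equality)
    fix q' assume "0 \<le> q' \<and> P q' = \<theta>"
    then show "q' = q"
      using P_less[of q q'] P_less[of q' q] q by (metis linorder_neq_iff order_less_irrefl)
  qed (use q in simp)
  then show "0 \<le> qeff P \<theta>" "qeff P \<theta> \<le> qbar" "P (qeff P \<theta>) = \<theta>"
    using q by auto
qed

text \<open>For \<theta> > P 0 the THE defining qeff P \<theta> is unconstrained, so (A2) alone does not give
  \<theta> \<le> P 0.\<close>
lemma le_P0_if_TS_qeff_pos:
  assumes "0 \<le> qeff P \<theta>" and "0 < TS P c \<theta> (qeff P \<theta>)"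
  shows "\<theta> \<le> P 0"
proof (rule ccontr)
  assume less: "\<not> \<theta> \<le> P 0"
  let ?q = "qeff P \<theta>"
  have "?q \<noteq> 0"
    using assms(2) by (auto simp: TS_def)
  then have q_pos: "0 < ?q"
    using assms(1) by simp
  have "V P ?q \<le> ?q * P 0"
    using V_diff_le[of 0 ?q] q_pos V_0 by simp
  also have "\<dots> < ?q * \<theta>"
    using less q_pos by simp
  finally have "TS P c \<theta> ?q < 0"
    using q_pos c_pos by (simp add: TS_def algebra_simps)
  then show False
    using assms(2) by simp
qed

end

locale regulation = demand +
  fixes tlo thi :: real
  assumes tlo_pos: "0 < tlo" and tlo_less_thi: "tlo < thi" and thi_le_P0: "thi \<le> P 0"
    and TS_qeff_thi_pos: "0 < TS P c thi (qeff P thi)"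
begin

lemma qeff_bounds:
  assumes "t \<in> {tlo..thi}"
  shows "0 \<le> qeff P t" "qeff P t \<le> qbar" "P (qeff P t) = t"
  using qeff_inverse[of t] assms tlo_pos thi_le_P0 by auto

lemma qeff_antimono: "antimono_on {tlo..thi} (qeff P)"
proof (rule monotone_onI)
  fix s t assume st: "s \<in> {tlo..thi}" "t \<in> {tlo..thi}" "s \<le> t"
  show "qeff P t \<le> qeff P s"
  proof (rule ccontr)
    assume "\<not> qeff P t \<le> qeff P s"
    then have "P (qeff P t) < P (qeff P s)"
      using P_less qeff_bounds(1)[of s] st by auto
    then show False
      using qeff_bounds(3) st by auto
  qed
qed

definition CS :: "real \<Rightarrow> real" where
  "CS q = V P q - q * P q"

lemma CS_0: "CS 0 = 0"
  by (simp add: CS_def V_0)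

lemma CS_strict_mono:
  assumes "0 < q1" "q1 < q2"
  shows "CS q1 < CS q2"
proof -
  have "(q2 - q1) * P q2 \<le> V P q2 - V P q1"
    using V_diff_ge assms by auto
  moreover have "q1 * P q2 < q1 * P q1"
    using P_less assms by simp
  ultimately show ?thesis
    unfolding CS_def by (simp add: algebra_simps)
qed

lemma CS_continuous_on: "continuous_on {0..B} CS"
proof -
  have "continuous_on {0..B} P"
    by (rule continuous_on_subset[OF P_continuous]) auto
  then show ?thesis
    unfolding CS_def[abs_def] using V_continuous_on[of B] by (intro continuous_intros) auto
qed

lemma qeff_thi_pos: "0 < qeff P thi"
proof -
  have "qeff P thi \<noteq> 0"
    using TS_qeff_thi_pos by (auto simp: TS_def)
  then show ?thesis
    using qeff_bounds(1)[of thi] tlo_less_thi by auto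
qed

lemma CS_qeff_thi: "c < CS (qeff P thi)"
  using TS_qeff_thi_pos qeff_thi_pos qeff_bounds(3)[of thi] tlo_less_thi
  by (auto simp: TS_def CS_def mult.commute)

abbreviation qhat :: real where
  "qhat \<equiv> qfloor P c"

lemma qhat: "0 < qhat" "CS qhat = c" "qhat < qeff P thi"
proof -
  obtain q where q: "0 \<le> q" "q \<le> qeff P thi" "CS q = c"
    using IVT'[of CS 0 c "qeff P thi"] CS_continuous_on CS_qeff_thi qeff_thi_pos c_pos CS_0
    by force
  have q_pos: "0 < q"
    using q c_pos CS_0 by (cases "q = 0") auto
  have "qhat = q"
    unfolding qfloor_def
  proof (rule the_equality)
    fix q' assume "0 < q' \<and> V P q' - q' * P q' = c"
    then show "q' = q"
      using CS_strict_mono[of q q'] CS_strict_mono[of q' q] q q_pos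
      by (metis CS_def less_le linorder_neq_iff order_less_irrefl)
  qed (use q q_pos in \<open>simp add: CS_def\<close>)
  then show "0 < qhat" "CS qhat = c" "qhat < qeff P thi"
    using q q_pos CS_qeff_thi by (auto simp: le_less)
qed

lemma c_le_CS: "qhat \<le> z \<Longrightarrow> c \<le> CS z"
  using CS_strict_mono[of qhat z] qhat by (cases "qhat = z") auto

lemma qhat_less_qeff: "t \<in> {tlo..thi} \<Longrightarrow> qhat < qeff P t"
  using qhat(3) monotone_onD[OF qeff_antimono, of t thi] tlo_less_thi by auto

lemma qhat_le_qbar: "qhat \<le> qbar"
  using qhat(3) qeff_bounds(2)[of thi] tlo_less_thi by auto

lemma le_P_qhat: "t \<in> {tlo..thi} \<Longrightarrow> t \<le> P qhat"
  using P_le[of qhat "qeff P t"] qhat_less_qeff qhat(1) qeff_bounds(3) by fastforce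


definition H :: "real \<Rightarrow> real" where
  "H z = V P (max z qhat) - c - (max z qhat - z) * P qhat"

lemma H_below: "z \<le> qhat \<Longrightarrow> H z = z * P qhat"
  using qhat(2) by (simp add: H_def CS_def max_def algebra_simps)

lemma H_above: "qhat \<le> z \<Longrightarrow> H z = V P z - c"
  by (simp add: H_def max_def)

lemma H_continuous_on: "continuous_on {0..qbar} H"
proof -
  have "continuous_on {0..qbar} (\<lambda>z. V P (max z qhat))"
    using qhat_le_qbar qhat(1)
    by (intro continuous_on_compose2[OF V_continuous_on[of qbar]] continuous_intros) auto
  then show ?thesis
    unfolding H_def[abs_def] by (intro continuous_intros)
qed

text \<open>Since CS qhat = c, the line z P(qhat) through the origin is tangent to V - c at qhat.\<close>
lemma V_minus_c_le_tangent:
  assumes "0 \<le> w"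
  shows "V P w - c \<le> w * P qhat"
proof (cases "qhat \<le> w")
  case True
  then have "V P w - V P qhat \<le> (w - qhat) * P qhat"
    using V_diff_le qhat(1) by auto
  then show ?thesis
    using qhat(2) by (simp add: CS_def algebra_simps)
next
  case False
  then have "(qhat - w) * P qhat \<le> V P qhat - V P w"
    using V_diff_ge assms by auto
  then show ?thesis
    using qhat(2) by (simp add: CS_def algebra_simps)
qed

definition floor_form :: "real \<Rightarrow> real \<Rightarrow> bool" where
  "floor_form q r \<longleftrightarrow> (qhat \<le> q \<and> r = 1) \<or> (q = qhat \<and> 0 < r \<and> r < 1) \<or> (q = 0 \<and> r = 0)"

lemma TS_randomized_le_H:
  assumes "0 \<le> r" "r \<le> 1" "0 \<le> q" "q = 0 \<longleftrightarrow> r = 0"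
  shows "r * TS P c t q \<le> H (q * r) - t * (q * r)"
proof (cases "q = 0")
  case True
  then show ?thesis
    using assms H_below[of 0] qhat(1) by (simp add: TS_def)
next
  case False
  then have q_pos: "0 < q" and r_pos: "0 < r"
    using assms by auto
  define z where "z = q * r"
  have z: "0 < z" "z \<le> q"
    using q_pos r_pos assms(2) by (auto simp: z_def mult_left_le)
  have "r * (V P q - c) \<le> H z"
  proof (cases "z \<le> qhat")
    case True
    have "r * (V P q - c) \<le> r * (q * P qhat)"
      using V_minus_c_le_tangent[of q] q_pos r_pos by (intro mult_left_mono) auto
    then show ?thesis
      using H_below[OF True] by (simp add: z_def algebra_simps)
  next
    case False
    text \<open>Concavity of V between z and q, and CS z \<ge> c.\<close>
    have concave: "V P q - V P z \<le> (q - z) * P z"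
      using V_diff_le z by auto
    have "z * (V P q - c) \<le> z * (V P z - c) + z * ((q - z) * P z)"
      using mult_left_mono[OF concave, of z] z by (simp add: algebra_simps)
    also have "z * ((q - z) * P z) \<le> (q - z) * (V P z - c)"
      using mult_left_mono[OF c_le_CS[of z], of "q - z"] False z by (simp add: CS_def algebra_simps)
    finally have "q * (r * (V P q - c)) \<le> q * (V P z - c)"
      by (simp add: z_def algebra_simps)
    then show ?thesis
      using H_above[of z] False q_pos by simp
  qed
  then show ?thesis
    using False by (simp add: TS_def z_def algebra_simps)
qed

lemma TS_randomized_eq_H:
  assumes "floor_form q r"
  shows "r * TS P c t q = H (q * r) - t * (q * r)"
  using assms unfolding floor_form_def
proof (elim disjE)
  assume "qhat \<le> q \<and> r = 1"
  then show ?thesis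
    using H_above[of q] qhat(1) by (auto simp: TS_def)
next
  assume floor: "q = qhat \<and> 0 < r \<and> r < 1"
  then have "H (q * r) = q * r * P qhat"
    using H_below[of "q * r"] qhat(1) by (simp add: mult_left_le)
  then show ?thesis
    using floor qhat by (simp add: TS_def CS_def algebra_simps)
next
  assume "q = 0 \<and> r = 0"
  then show ?thesis
    using H_below[of 0] qhat(1) by (simp add: TS_def)
qed

lemma H_minus_linear_mono:
  assumes t: "t \<in> {tlo..thi}" and zw: "z \<le> w" "w \<le> qeff P t"
  shows "H z - t * z \<le> H w - t * w"
proof -
  have below: "H z' - t * z' \<le> H w' - t * w'" if "z' \<le> w'" "w' \<le> qhat" for z' w'
  proof -
    have "(w' - z') * t \<le> (w' - z') * P qhat"
      using le_P_qhat[OF t] that by (intro mult_left_mono) auto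
    then show ?thesis
      using H_below that by (simp add: algebra_simps)
  qed
  have above: "H z' - t * z' \<le> H w' - t * w'" if "qhat \<le> z'" "z' \<le> w'" "w' \<le> qeff P t" for z' w'
  proof -
    have "t \<le> P w'"
      using P_le[of w' "qeff P t"] qeff_bounds(3)[OF t] that qhat(1) by fastforce
    then have "(w' - z') * t \<le> (w' - z') * P w'"
      using that by (intro mult_left_mono) auto
    moreover have "(w' - z') * P w' \<le> V P w' - V P z'"
      using V_diff_ge that qhat(1) by auto
    ultimately show ?thesis
      using H_above[of z'] H_above[of w'] that by (simp add: algebra_simps)
  qed
  consider "w \<le> qhat" | "qhat \<le> z" | "z < qhat" "qhat < w"
    by fastforce
  then show ?thesis
  proof cases
    case 3
    then have "H z - t * z \<le> H qhat - t * qhat"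
      by (intro below) auto
    also have "\<dots> \<le> H w - t * w"
      using 3 zw by (intro above) auto
    finally show ?thesis .
  qed (use below above zw in auto)
qed

lemma H_minus_linear_le_qeff:
  assumes t: "t \<in> {tlo..thi}"
  shows "H z - t * z \<le> H (qeff P t) - t * qeff P t"
proof (cases "z \<le> qeff P t")
  case True
  then show ?thesis
    using H_minus_linear_mono[OF t] by auto
next
  case False
  have "qhat \<le> qeff P t"
    using qhat_less_qeff[OF t] by simp
  moreover have "V P z - V P (qeff P t) \<le> (z - qeff P t) * P (qeff P t)"
    using V_diff_le[of "qeff P t" z] qeff_bounds[OF t] False by auto
  ultimately show ?thesis
    using H_above[of z] H_above[of "qeff P t"] False qeff_bounds(3)[OF t] by (simp add: algebra_simps)
qed


definition RS_env :: "real \<Rightarrow> real \<Rightarrow> real \<Rightarrow> real \<Rightarrow> real" where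
  "RS_env \<alpha> t z v = H z - t * z - (1 - \<alpha>) * v"

lemma RS_env_rent_antimono:
  assumes "\<alpha> \<le> 1" "v \<le> v'"
  shows "RS_env \<alpha> t z v' \<le> RS_env \<alpha> t z v"
  using assms by (simp add: RS_env_def mult_left_mono)

lemma RS_le_RS_env:
  assumes "mechanism tlo thi qbar r q u" "t \<in> {tlo..thi}"
  shows "RS P c \<alpha> t r q u \<le> RS_env \<alpha> t (q t * r t) (u t)"
  using TS_randomized_le_H[of "r t" "q t" t] assms
  by (simp add: RS_def RS_env_def mechanism_def)

lemma floor_randomized_floor_form:
  assumes "floor_randomized tlo thi qbar P c r q u" "t \<in> {tlo..thi}"
  shows "floor_form (q t) (r t)"
  using assms unfolding floor_randomized_def floor_form_def by blast

lemma RS_eq_RS_env: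
  assumes "floor_form (q t) (r t)"
  shows "RS P c \<alpha> t r q u = RS_env \<alpha> t (q t * r t) (u t)"
  using TS_randomized_eq_H[OF assms, of t] by (simp add: RS_def RS_env_def)

definition floor_quantity :: "(real \<Rightarrow> real) \<Rightarrow> real \<Rightarrow> real" where
  "floor_quantity z t = (if z t = 0 then 0 else max (z t) qhat)"

definition floor_prob :: "(real \<Rightarrow> real) \<Rightarrow> real \<Rightarrow> real" where
  "floor_prob z t = (if z t = 0 then 0 else z t / max (z t) qhat)"

definition rent :: "(real \<Rightarrow> real) \<Rightarrow> real \<Rightarrow> real" where
  "rent z t = integral {t..thi} z"

lemma floor_quantity_mult_prob: "floor_quantity z t * floor_prob z t = z t"
  using qhat(1) by (auto simp: floor_quantity_def floor_prob_def max_def)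

lemma floor_form_floor_schedule:
  assumes "0 \<le> z t"
  shows "floor_form (floor_quantity z t) (floor_prob z t)"
  using assms qhat(1)
  by (cases "z t = 0") (auto simp: floor_form_def floor_quantity_def floor_prob_def max_def)

lemma floor_mechanism_bounds:
  assumes "0 \<le> z t" "z t \<le> qbar"
  shows "0 \<le> floor_prob z t \<and> floor_prob z t \<le> 1 \<and> 0 \<le> floor_quantity z t \<and>
    floor_quantity z t \<le> qbar \<and> (floor_quantity z t = 0 \<longleftrightarrow> floor_prob z t = 0)"
proof -
  have "floor_quantity z t \<le> qbar"
    using assms qhat_le_qbar by (simp add: floor_quantity_def)
  then show ?thesis
    using floor_form_floor_schedule[of z t] assms qhat(1) unfolding floor_form_def by auto
qed

lemma RS_floor_mechanism:
  assumes "0 \<le> z t"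
  shows "RS P c \<alpha> t (floor_prob z) (floor_quantity z) (rent z) = RS_env \<alpha> t (z t) (rent z t)"
  using RS_eq_RS_env[where q = "floor_quantity z" and r = "floor_prob z",
      OF floor_form_floor_schedule[of z t, OF assms]] floor_quantity_mult_prob
  by simp

context
  fixes z :: "real \<Rightarrow> real"
  assumes z_antimono: "antimono_on {tlo..thi} z"
    and z_bounds: "\<And>t. t \<in> {tlo..thi} \<Longrightarrow> 0 \<le> z t \<and> z t \<le> qbar"
begin

lemma rent_diff:
  assumes "tlo \<le> s" "s \<le> t" "t \<le> thi"
  shows "rent z s - rent z t = integral {s..t} z"
proof -
  have "z integrable_on {s..thi}"
    using antimono_on_integrable_subinterval[OF z_antimono] assms by simp
  then have "integral {s..t} z + integral {t..thi} z = integral {s..thi} z"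
    using assms by (intro Henstock_Kurzweil_Integration.integral_combine) auto
  then show ?thesis
    by (simp add: rent_def)
qed

lemma feasible_floor_mechanism: "feasible tlo thi qbar (floor_prob z) (floor_quantity z) (rent z)"
proof -
  have "mechanism tlo thi qbar (floor_prob z) (floor_quantity z) (rent z)"
    unfolding mechanism_def
  proof
    fix t assume t: "t \<in> {tlo..thi}"
    show "0 \<le> floor_prob z t \<and> floor_prob z t \<le> 1 \<and> 0 \<le> floor_quantity z t \<and>
        floor_quantity z t \<le> qbar \<and> (floor_quantity z t = 0) = (floor_prob z t = 0)"
      using floor_mechanism_bounds z_bounds[OF t] by blast
  qed
  moreover have "IC tlo thi (floor_prob z) (floor_quantity z) (rent z)"
    unfolding IC_def
  proof (intro ballI)
    fix s t assume s: "s \<in> {tlo..thi}" and t: "t \<in> {tlo..thi}"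
    have "(t - s) * z t \<le> rent z s - rent z t"
    proof (cases "s \<le> t")
      case True
      then show ?thesis
        using rent_diff[of s t] antimono_on_integral_bounds(1)[OF z_antimono, of s t] s t by auto
    next
      case False
      have "(t - s) * z t = - ((s - t) * z t)"
        by (simp add: algebra_simps)
      then show ?thesis
        using rent_diff[of t s] antimono_on_integral_bounds(2)[OF z_antimono, of t s] False s t by auto
    qed
    then show "rent z t + (t - s) * floor_quantity z t * floor_prob z t \<le> rent z s"
      using floor_quantity_mult_prob[of z t] by (simp add: algebra_simps)
  qed
  moreover have "IR tlo thi (rent z)"
    unfolding IR_def rent_def
  proof
    fix t assume t: "t \<in> {tlo..thi}"
    have "z integrable_on {t..thi}"
      using antimono_on_integrable_subinterval[OF z_antimono] t by simp
    then show "0 \<le> integral {t..thi} z"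
      using z_bounds t by (intro integral_nonneg) auto
  qed
  ultimately show ?thesis
    by (simp add: feasible_def)
qed

lemma floor_randomized_floor_mechanism:
  "floor_randomized tlo thi qbar P c (floor_prob z) (floor_quantity z) (rent z)"
  unfolding floor_randomized_def
proof (intro conjI feasible_floor_mechanism)
  show "rent z thi = 0"
    by (simp add: rent_def)
  define T1 where "T1 = {t \<in> {tlo..thi}. qhat \<le> z t}"
  define T01 where "T01 = {t \<in> {tlo..thi}. 0 < z t \<and> z t < qhat}"
  define T0 where "T0 = {t \<in> {tlo..thi}. z t = 0}"
  have z_le: "z t \<le> z s" if "s \<in> {tlo..thi}" "t \<in> {tlo..thi}" "s \<le> t" for s t
    using z_antimono that by (auto simp: monotone_on_def)
  have less: "s < t" if "s \<in> {tlo..thi}" "t \<in> {tlo..thi}" "z t < z s" for s t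
    using z_le[of t s] that by fastforce
  have interval: "interval_set {t \<in> {tlo..thi}. A (z t)}"
    if convex: "\<And>a b w. A a \<Longrightarrow> A b \<Longrightarrow> b \<le> w \<Longrightarrow> w \<le> a \<Longrightarrow> A w" for A
    unfolding interval_set_def
  proof (intro ballI allI impI)
    fix x y w assume x: "x \<in> {t \<in> {tlo..thi}. A (z t)}" and y: "y \<in> {t \<in> {tlo..thi}. A (z t)}"
      and w: "x \<le> w \<and> w \<le> y"
    then have "w \<in> {tlo..thi}"
      by auto
    then show "w \<in> {t \<in> {tlo..thi}. A (z t)}"
      using convex[of "z x" "z y" "z w"] z_le[of x w] z_le[of w y] x y w by auto
  qed
  show "\<exists>T1 T01 T0.
      interval_set T1 \<and> interval_set T01 \<and> interval_set T0 \<and>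
      T1 \<inter> T01 = {} \<and> T1 \<inter> T0 = {} \<and> T01 \<inter> T0 = {} \<and>
      T1 \<union> T01 \<union> T0 = {tlo..thi} \<and>
      (\<forall>x\<in>T0. \<forall>y\<in>T01. x > y) \<and> (\<forall>x\<in>T01. \<forall>y\<in>T1. x > y) \<and>
      (\<forall>\<theta>\<in>T1. qfloor P c \<le> floor_quantity z \<theta> \<and> floor_prob z \<theta> = 1) \<and>
      (\<forall>\<theta>\<in>T01. floor_quantity z \<theta> = qfloor P c \<and> 0 < floor_prob z \<theta> \<and> floor_prob z \<theta> < 1) \<and>
      (\<forall>\<theta>\<in>T0. floor_quantity z \<theta> = 0 \<and> floor_prob z \<theta> = 0)"
  proof (intro exI conjI)
    show "interval_set T1"
      unfolding T1_def by (rule interval[where A = "\<lambda>x. qhat \<le> x"]) auto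
    show "interval_set T01"
      unfolding T01_def by (rule interval[where A = "\<lambda>x. 0 < x \<and> x < qhat"]) auto
    show "interval_set T0"
      unfolding T0_def by (rule interval[where A = "\<lambda>x. x = 0"]) auto
    show "T1 \<inter> T01 = {}" "T1 \<inter> T0 = {}" "T01 \<inter> T0 = {}"
      using qhat(1) by (auto simp: T1_def T01_def T0_def)
    show "T1 \<union> T01 \<union> T0 = {tlo..thi}"
    proof
      show "{tlo..thi} \<subseteq> T1 \<union> T01 \<union> T0"
      proof
        fix t assume t: "t \<in> {tlo..thi}"
        then have "0 \<le> z t"
          using z_bounds by blast
        then show "t \<in> T1 \<union> T01 \<union> T0"
          using t by (auto simp: T1_def T01_def T0_def)
      qed
    qed (auto simp: T1_def T01_def T0_def)
    show "\<forall>x\<in>T0. \<forall>y\<in>T01. x > y"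
    proof (intro ballI)
      fix x y assume "x \<in> T0" "y \<in> T01"
      then show "y < x"
        using less[of y x] by (simp add: T0_def T01_def)
    qed
    show "\<forall>x\<in>T01. \<forall>y\<in>T1. x > y"
    proof (intro ballI)
      fix x y assume "x \<in> T01" "y \<in> T1"
      then show "y < x"
        using less[of y x] by (simp add: T1_def T01_def)
    qed
    show "\<forall>\<theta>\<in>T1. qfloor P c \<le> floor_quantity z \<theta> \<and> floor_prob z \<theta> = 1"
      "\<forall>\<theta>\<in>T01. floor_quantity z \<theta> = qfloor P c \<and> 0 < floor_prob z \<theta> \<and> floor_prob z \<theta> < 1"
      "\<forall>\<theta>\<in>T0. floor_quantity z \<theta> = 0 \<and> floor_prob z \<theta> = 0"
      using qhat(1) by (auto simp: T1_def T01_def T0_def floor_quantity_def floor_prob_def max_def)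
  qed
qed

end

lemma rent_mono:
  assumes "antimono_on {tlo..thi} f" "antimono_on {tlo..thi} g"
    and "\<And>s. s \<in> {tlo..thi} \<Longrightarrow> f s \<le> g s" and "t \<in> {tlo..thi}"
  shows "rent f t \<le> rent g t"
  unfolding rent_def
  by (rule integral_le) (use assms antimono_on_integrable_subinterval in auto)

lemma left_continuous_floor_mechanism:
  assumes "\<And>t. t \<in> {tlo<..thi} \<Longrightarrow> (z \<longlongrightarrow> z t) (at_left t)"
  shows "left_continuous tlo thi (floor_prob z) (floor_quantity z)"
  using assms by (simp add: left_continuous_def floor_quantity_mult_prob continuous_within)

end

section \<open>Improving a dominated floor-randomized mechanism\<close>

text \<open>Lemma names refer to M = (r, q, u), the dominating M1 = (r1, q1, u1), and the
  improvement M' = (r', q', u') built from the schedule Z.\<close>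
locale improvement = regulation +
  fixes \<alpha> :: real and r q u r1 q1 u1 :: "real \<Rightarrow> real"
  assumes alpha_less: "\<alpha> < 1"
    and M_floor_randomized: "floor_randomized tlo thi qbar P c r q u"
    and M_left_continuous: "left_continuous tlo thi r q"
    and M_DD: "DD tlo thi P q"
    and dominating: "dominates tlo thi qbar P c \<alpha> r1 q1 u1 r q u"
begin

definition qr :: "real \<Rightarrow> real" where
  "qr t = q t * r t"

definition qr1 :: "real \<Rightarrow> real" where
  "qr1 t = q1 t * r1 t"

text \<open>The value at tlo makes Z tlo = qr tlo, which preserves DD.\<close>
definition L :: "real \<Rightarrow> real" where
  "L = left_regularization qr1 tlo (max (qr tlo) (qr1 tlo))"

definition Z :: "real \<Rightarrow> real" where
  "Z t = min (qr t) (L t)"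

lemma M_feasible: "mechanism tlo thi qbar r q u" "IC tlo thi r q u" "u thi = 0"
  using M_floor_randomized by (auto simp: floor_randomized_def feasible_def)

lemma M1_feasible: "mechanism tlo thi qbar r1 q1 u1" "IC tlo thi r1 q1 u1" "0 \<le> u1 thi"
  using dominating tlo_less_thi by (auto simp: dominates_def feasible_def IR_def)

lemma qr_bounds: "t \<in> {tlo..thi} \<Longrightarrow> 0 \<le> qr t \<and> qr t \<le> q t \<and> qr t \<le> qbar"
  using mechanism_expected_quantity_bounds[OF M_feasible(1)] by (fastforce simp: qr_def)

lemma qr1_bounds: "t \<in> {tlo..thi} \<Longrightarrow> 0 \<le> qr1 t \<and> qr1 t \<le> qbar"
  using mechanism_expected_quantity_bounds[OF M1_feasible(1)] by (fastforce simp: qr1_def)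

lemma qr_antimono: "antimono_on {tlo..thi} qr"
  using IC_antimono[OF M_feasible(2)] by (simp add: qr_def[abs_def])

lemma qr1_antimono: "antimono_on {tlo..thi} qr1"
  using IC_antimono[OF M1_feasible(2)] by (simp add: qr1_def[abs_def])

lemma tendsto_qr: "tlo < t \<Longrightarrow> t \<le> thi \<Longrightarrow> (qr \<longlongrightarrow> qr t) (at_left t)"
  using M_left_continuous by (simp add: left_continuous_def continuous_within qr_def[abs_def])

lemma qr_tlo: "qr tlo = qeff P tlo"
proof -
  have tlo: "tlo \<in> {tlo..thi}"
    using tlo_less_thi by simp
  have "q tlo = qeff P tlo"
    using M_DD by (simp add: DD_def)
  then have "r tlo = 1"
    using floor_randomized_floor_form[OF M_floor_randomized tlo] qhat_less_qeff[OF tlo] qhat(1)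
    by (auto simp: floor_form_def)
  then show ?thesis
    using \<open>q tlo = qeff P tlo\<close> by (simp add: qr_def)
qed

lemma u_eq_rent: "t \<in> {tlo..thi} \<Longrightarrow> u t = rent qr t"
  using IC_rent_eq_integral_expected_quantity[OF M_feasible(2)] M_feasible(3)
  by (simp add: rent_def qr_def[abs_def])

lemma RS_M:
  assumes "t \<in> {tlo..thi}"
  shows "RS P c \<alpha> t r q u = RS_env \<alpha> t (qr t) (u t)"
  using RS_eq_RS_env[where q = q and r = r, OF floor_randomized_floor_form[OF M_floor_randomized assms]]
  by (simp add: qr_def)

lemma RS_M1_le: "t \<in> {tlo..thi} \<Longrightarrow> RS P c \<alpha> t r1 q1 u1 \<le> RS_env \<alpha> t (qr1 t) (u1 t)"
  using RS_le_RS_env[OF M1_feasible(1)] by (simp add: qr1_def)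

lemma RS_env_M_le_M1:
  assumes t: "t \<in> {tlo..thi}"
  shows "RS_env \<alpha> t (qr t) (u t) \<le> RS_env \<alpha> t (qr1 t) (u1 t)"
proof -
  have "RS P c \<alpha> t r q u \<le> RS P c \<alpha> t r1 q1 u1"
    using dominating t unfolding dominates_def by blast
  then show ?thesis
    using RS_M[OF t] RS_M1_le[OF t] by linarith
qed

lemma L_ge_qr1: "t \<in> {tlo..thi} \<Longrightarrow> qr1 t \<le> L t"
  unfolding L_def by (rule le_left_regularization[OF qr1_antimono]) auto

lemma L_antimono: "antimono_on {tlo..thi} L"
  unfolding L_def by (rule left_regularization_antimono[OF qr1_antimono]) auto

lemma tendsto_L:
  assumes "tlo < t" "t \<le> thi"
  shows "(qr1 \<longlongrightarrow> L t) (at_left t)" "(L \<longlongrightarrow> L t) (at_left t)"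
  unfolding L_def using tendsto_left_regularization[OF qr1_antimono _ assms] by auto

lemma L_bounds:
  assumes t: "t \<in> {tlo..thi}"
  shows "0 \<le> L t \<and> L t \<le> qbar"
proof -
  have "L t \<le> L tlo"
    using monotone_onD[OF L_antimono, of tlo t] t by simp
  also have "L tlo = max (qr tlo) (qr1 tlo)"
    by (simp add: L_def left_regularization_def)
  finally have "L t \<le> qbar"
    using qr_bounds[of tlo] qr1_bounds[of tlo] tlo_less_thi by auto
  then show ?thesis
    using L_ge_qr1[OF t] qr1_bounds[OF t] by simp
qed

lemma rent_L_le_u1:
  assumes t: "t \<in> {tlo..thi}"
  shows "rent L t \<le> u1 t"
proof -
  have "u1 t - u1 thi = integral {t..thi} L"
  proof (rule IC_rent_eq_integral[OF M1_feasible(2)])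
    show "L integrable_on {t..thi}"
      using antimono_on_integrable_subinterval[OF L_antimono] t by simp
    fix s s' assume "t \<le> s" "s \<le> s'" "s' \<le> thi"
    then show "(s' - s) * (q1 s' * r1 s') \<le> integral {s..s'} L \<and>
        integral {s..s'} L \<le> (s' - s) * (q1 s * r1 s)"
      using left_regularization_integral_bounds[OF qr1_antimono, of "max (qr tlo) (qr1 tlo)" s s'] t
      by (simp add: L_def qr1_def)
  qed (use t in auto)
  then show ?thesis
    using M1_feasible(3) by (simp add: rent_def)
qed

text \<open>Passing to the limit from the left in the pointwise domination inequality.\<close>
lemma RS_env_M_le_L:
  assumes t: "tlo < t" "t \<le> thi"
  shows "RS_env \<alpha> t (qr t) (u t) \<le> RS_env \<alpha> t (L t) (u1 t)"
proof (rule tendsto_le[of "at_left t"])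
  have left: "\<forall>\<^sub>F s in at_left t. s \<in> {tlo..thi}"
    using t by (intro eventually_at_leftI[OF _ t(1)]) auto
  have "((\<lambda>s. H (qr1 s)) \<longlongrightarrow> H (L t)) (at_left t)"
  proof (rule continuous_on_tendsto_compose[OF H_continuous_on tendsto_L(1)[OF t]])
    show "L t \<in> {0..qbar}"
      using L_bounds t by simp
    show "\<forall>\<^sub>F s in at_left t. qr1 s \<in> {0..qbar}"
      using left by eventually_elim (use qr1_bounds in simp)
  qed
  then show "((\<lambda>s. RS_env \<alpha> s (qr1 s) (u1 s)) \<longlongrightarrow> RS_env \<alpha> t (L t) (u1 t)) (at_left t)"
    unfolding RS_env_def
    by (intro tendsto_intros tendsto_L(1)[OF t] IC_tendsto_left[OF M1_feasible(2,1) t])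
  have "((\<lambda>s. H (qr s)) \<longlongrightarrow> H (qr t)) (at_left t)"
  proof (rule continuous_on_tendsto_compose[OF H_continuous_on tendsto_qr[OF t]])
    show "qr t \<in> {0..qbar}"
      using qr_bounds t by simp
    show "\<forall>\<^sub>F s in at_left t. qr s \<in> {0..qbar}"
      using left by eventually_elim (use qr_bounds in simp)
  qed
  then show "((\<lambda>s. RS_env \<alpha> s (qr s) (u s)) \<longlongrightarrow> RS_env \<alpha> t (qr t) (u t)) (at_left t)"
    unfolding RS_env_def
    by (intro tendsto_intros tendsto_qr[OF t] IC_tendsto_left[OF M_feasible(2,1) t])
  show "\<forall>\<^sub>F s in at_left t. RS_env \<alpha> s (qr s) (u s) \<le> RS_env \<alpha> s (qr1 s) (u1 s)"
    using left by eventually_elim (rule RS_env_M_le_M1)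
qed simp


lemma Z_bounds: "t \<in> {tlo..thi} \<Longrightarrow> 0 \<le> Z t \<and> Z t \<le> qr t \<and> Z t \<le> L t \<and> Z t \<le> qbar"
  using qr_bounds L_bounds by (force simp: Z_def min_le_iff_disj)

lemma Z_antimono: "antimono_on {tlo..thi} Z"
proof (rule monotone_onI)
  fix s t assume st: "s \<in> {tlo..thi}" "t \<in> {tlo..thi}" "s \<le> t"
  show "Z t \<le> Z s"
    unfolding Z_def using monotone_onD[OF qr_antimono st] monotone_onD[OF L_antimono st] by (rule min.mono)
qed

lemma Z_tlo: "Z tlo = qr tlo"
  by (simp add: Z_def L_def left_regularization_def)

lemma tendsto_Z: "tlo < t \<Longrightarrow> t \<le> thi \<Longrightarrow> (Z \<longlongrightarrow> Z t) (at_left t)"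
  unfolding Z_def[abs_def] by (intro tendsto_min tendsto_qr tendsto_L(2))

abbreviation r' :: "real \<Rightarrow> real" where "r' \<equiv> floor_prob Z"
abbreviation q' :: "real \<Rightarrow> real" where "q' \<equiv> floor_quantity Z"
abbreviation u' :: "real \<Rightarrow> real" where "u' \<equiv> rent Z"

lemma M'_floor_randomized: "floor_randomized tlo thi qbar P c r' q' u'"
  by (rule floor_randomized_floor_mechanism[OF Z_antimono]) (use Z_bounds in auto)

lemma M'_left_continuous: "left_continuous tlo thi r' q'"
  by (rule left_continuous_floor_mechanism) (use tendsto_Z in auto)

lemma RS_M': "t \<in> {tlo..thi} \<Longrightarrow> RS P c \<alpha> t r' q' u' = RS_env \<alpha> t (Z t) (u' t)"
  using RS_floor_mechanism Z_bounds by blast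

lemma u'_le_u: "t \<in> {tlo..thi} \<Longrightarrow> u' t \<le> u t"
  using rent_mono[OF Z_antimono qr_antimono] Z_bounds u_eq_rent by simp

lemma u'_le_u1: "t \<in> {tlo..thi} \<Longrightarrow> u' t \<le> u1 t"
  using rent_mono[OF Z_antimono L_antimono] Z_bounds rent_L_le_u1 by (meson order_trans)

lemma RS_M_le_M':
  assumes t: "t \<in> {tlo..thi}"
  shows "RS P c \<alpha> t r q u \<le> RS P c \<alpha> t r' q' u'"
proof (cases "Z t = qr t")
  case True
  then show ?thesis
    using RS_M[OF t] RS_M'[OF t] RS_env_rent_antimono[OF _ u'_le_u[OF t]] alpha_less by simp
next
  case False
  then have "t \<noteq> tlo" and "Z t = L t"
    using Z_tlo by (auto simp: Z_def min_def)
  then have "tlo < t"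
    using t by auto
  then have "RS_env \<alpha> t (qr t) (u t) \<le> RS_env \<alpha> t (L t) (u1 t)"
    using RS_env_M_le_L t by simp
  also have "\<dots> \<le> RS_env \<alpha> t (L t) (u' t)"
    using RS_env_rent_antimono[OF _ u'_le_u1[OF t]] alpha_less by simp
  finally show ?thesis
    using RS_M[OF t] RS_M'[OF t] \<open>Z t = L t\<close> by simp
qed

lemma DD_M': "DD tlo thi P q'"
  unfolding DD_def
proof
  have "q' t \<le> q t" if t: "t \<in> {tlo..thi}" for t
  proof (cases "Z t = 0")
    case False
    then have "0 < qr t"
      using Z_bounds[OF t] by auto
    then have "qhat \<le> q t"
      using floor_randomized_floor_form[OF M_floor_randomized t] by (auto simp: floor_form_def qr_def)
    then show ?thesis
      using False Z_bounds[OF t] qr_bounds[OF t] by (simp add: floor_quantity_def)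
  qed (use qr_bounds[OF t] in \<open>auto simp: floor_quantity_def\<close>)
  then show "\<forall>t\<in>{tlo..thi}. q' t \<le> qeff P t"
    using M_DD by (force simp: DD_def)
  have "qhat < qeff P tlo"
    using qhat_less_qeff tlo_less_thi by simp
  then show "q' tlo = qeff P tlo"
    using Z_tlo qr_tlo qhat(1) by (simp add: floor_quantity_def)
qed

text \<open>If M' gained nothing at tlo, the chain rent L \<le> u1 \<le> u \<le> u' = rent Z \<le> rent L
  collapses at tlo.\<close>
lemma rents_coincide_if_no_gain_at_tlo:
  assumes no_gain: "RS P c \<alpha> tlo r' q' u' \<le> RS P c \<alpha> tlo r q u"
  shows "rent qr tlo = rent Z tlo" and "rent L tlo = rent Z tlo"
proof -
  have tlo: "tlo \<in> {tlo..thi}"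
    using tlo_less_thi by simp
  have "(1 - \<alpha>) * u tlo \<le> (1 - \<alpha>) * u' tlo"
    using no_gain RS_M[OF tlo] RS_M'[OF tlo] Z_tlo by (simp add: RS_env_def)
  then have "u tlo \<le> u' tlo"
    using alpha_less by simp
  moreover have "(1 - \<alpha>) * u1 tlo \<le> (1 - \<alpha>) * u tlo"
    using RS_env_M_le_M1[OF tlo] H_minus_linear_le_qeff[OF tlo, of "qr1 tlo"] qr_tlo
    by (simp add: RS_env_def)
  then have "u1 tlo \<le> u tlo"
    using alpha_less by simp
  moreover have "u' tlo \<le> rent L tlo"
    using rent_mono[OF Z_antimono L_antimono] Z_bounds tlo by simp
  ultimately show "rent qr tlo = rent Z tlo" and "rent L tlo = rent Z tlo"
    using u'_le_u[OF tlo] u_eq_rent[OF tlo] rent_L_le_u1[OF tlo] by linarith+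
qed

context
  assumes rents_qr: "rent qr tlo = rent Z tlo" and rents_L: "rent L tlo = rent Z tlo"
begin

lemma u_le_u1_if_rents_coincide:
  assumes t: "t \<in> {tlo..thi}"
  shows "u t \<le> u1 t"
proof -
  have int: "f integrable_on {t..thi}" if "antimono_on {tlo..thi} f" for f :: "real \<Rightarrow> real"
    using antimono_on_integrable_subinterval[OF that] t by simp
  have gap_int: "(\<lambda>s. qr s - Z s) integrable_on {tlo..thi}"
    using antimono_on_integrable[OF qr_antimono] antimono_on_integrable[OF Z_antimono]
    by (rule integrable_diff)
  have "u t - u' t = integral {t..thi} (\<lambda>s. qr s - Z s)"
    using u_eq_rent[OF t] int[OF qr_antimono] int[OF Z_antimono] by (simp add: rent_def integral_diff)
  also have "\<dots> \<le> integral {tlo..thi} (\<lambda>s. qr s - Z s)"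
    using integral_subinterval_le[OF gap_int] Z_bounds t by simp
  also have "\<dots> = 0"
    using rents_qr antimono_on_integrable[OF qr_antimono] antimono_on_integrable[OF Z_antimono]
    by (simp add: rent_def integral_diff)
  finally show ?thesis
    using u'_le_u1[OF t] by simp
qed

lemma L_eq_Z_if_rents_coincide:
  assumes t: "tlo < t" "t \<le> thi"
  shows "L t = Z t"
proof -
  have "L t - Z t = 0"
  proof (rule zero_if_integral_zero_left_continuous[of "\<lambda>s. L s - Z s" tlo thi])
    show "(\<lambda>s. L s - Z s) integrable_on {tlo..thi}"
      using antimono_on_integrable[OF L_antimono] antimono_on_integrable[OF Z_antimono]
      by (rule integrable_diff)
    show "integral {tlo..thi} (\<lambda>s. L s - Z s) = 0"
      using rents_L antimono_on_integrable[OF L_antimono] antimono_on_integrable[OF Z_antimono]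
      by (simp add: rent_def integral_diff)
    show "((\<lambda>s. L s - Z s) \<longlongrightarrow> L t - Z t) (at_left t)"
      by (intro tendsto_diff tendsto_L(2) tendsto_Z t)
  qed (use Z_bounds t in auto)
  then show ?thesis
    by simp
qed

lemma RS_M1_le_M_if_rents_coincide:
  assumes t: "t \<in> {tlo..thi}"
  shows "RS P c \<alpha> t r1 q1 u1 \<le> RS P c \<alpha> t r q u"
proof -
  have "H (qr1 t) - t * qr1 t \<le> H (qr t) - t * qr t"
  proof (cases "t = tlo")
    case True
    then show ?thesis
      using H_minus_linear_le_qeff[OF t] qr_tlo by simp
  next
    case False
    then have "qr1 t \<le> qr t"
      using L_ge_qr1[OF t] L_eq_Z_if_rents_coincide[of t] Z_bounds[OF t] t by fastforce
    moreover have "qr t \<le> qeff P t"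
      using qr_bounds[OF t] M_DD t by (force simp: DD_def)
    ultimately show ?thesis
      by (rule H_minus_linear_mono[OF t])
  qed
  then have "RS_env \<alpha> t (qr1 t) (u1 t) \<le> RS_env \<alpha> t (qr t) (u1 t)"
    by (simp add: RS_env_def)
  also have "\<dots> \<le> RS_env \<alpha> t (qr t) (u t)"
    using RS_env_rent_antimono u_le_u1_if_rents_coincide[OF t] alpha_less by simp
  finally have "RS_env \<alpha> t (qr1 t) (u1 t) \<le> RS_env \<alpha> t (qr t) (u t)" .
  then show ?thesis
    using RS_M1_le[OF t] RS_M[OF t] by simp
qed

end

lemma M'_strict_gain: "\<exists>t\<in>{tlo..thi}. RS P c \<alpha> t r q u < RS P c \<alpha> t r' q' u'"
proof (rule ccontr)
  assume "\<not> ?thesis"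
  then have "RS P c \<alpha> tlo r' q' u' \<le> RS P c \<alpha> tlo r q u"
    using tlo_less_thi by force
  then have "RS P c \<alpha> t r1 q1 u1 \<le> RS P c \<alpha> t r q u" if "t \<in> {tlo..thi}" for t
    using RS_M1_le_M_if_rents_coincide rents_coincide_if_no_gain_at_tlo that by blast
  then show False
    using dominating by (force simp: dominates_def)
qed

theorem floor_randomized_improvement:
  "\<exists>r' q' u'. floor_randomized tlo thi qbar P c r' q' u' \<and>
     left_continuous tlo thi r' q' \<and> DD tlo thi P q' \<and>
     dominates tlo thi qbar P c \<alpha> r' q' u' r q u \<and>
     (\<forall>\<theta>\<in>{tlo..thi}. q' \<theta> * r' \<theta> \<le> q \<theta> * r \<theta>)"
proof (intro exI conjI)
  show "floor_randomized tlo thi qbar P c r' q' u'"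
    by (rule M'_floor_randomized)
  show "left_continuous tlo thi r' q'"
    by (rule M'_left_continuous)
  show "DD tlo thi P q'"
    by (rule DD_M')
  show "dominates tlo thi qbar P c \<alpha> r' q' u' r q u"
    using M'_floor_randomized M_floor_randomized RS_M_le_M' M'_strict_gain
    by (simp add: dominates_def floor_randomized_def)
  show "\<forall>\<theta>\<in>{tlo..thi}. q' \<theta> * r' \<theta> \<le> q \<theta> * r \<theta>"
    using Z_bounds floor_quantity_mult_prob by (simp add: qr_def)
qed

end

theorem theorem5:
  fixes tlo thi c qbar \<alpha> :: real and P r q u :: "real \<Rightarrow> real"
  assumes "0 < tlo" and "tlo < thi" and "c > 0"
    and "continuous_on {0..} P" and "strict_antimono_on {0..} P"
    and "qbar > 0" and "P qbar = 0"
    and A2: "TS P c thi (qeff P thi) > 0"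
    and "0 \<le> \<alpha>" and "\<alpha> < 1"
    and FR: "floor_randomized tlo thi qbar P c r q u"
    and LC: "left_continuous tlo thi r q"
    and "DD tlo thi P q"
    and dom: "dominated tlo thi qbar P c \<alpha> r q u"
  shows "\<exists>r' q' u'. floor_randomized tlo thi qbar P c r' q' u' \<and>
           left_continuous tlo thi r' q' \<and> DD tlo thi P q' \<and>
           dominates tlo thi qbar P c \<alpha> r' q' u' r q u \<and>
           (\<forall>\<theta>\<in>{tlo..thi}. q' \<theta> * r' \<theta> \<le> q \<theta> * r \<theta>)"
proof -
  interpret demand P c qbar
    using assms(3-7) by unfold_locales
  have "0 \<le> q thi" "q thi \<le> qeff P thi"
    using FR \<open>DD tlo thi P q\<close> \<open>tlo < thi\<close>
    by (auto simp: floor_randomized_def feasible_def mechanism_def DD_def)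
  then have "thi \<le> P 0"
    using le_P0_if_TS_qeff_pos A2 by simp
  then interpret regulation P c qbar tlo thi
    using assms(1,2) A2 by unfold_locales
  obtain r1 q1 u1 where "dominates tlo thi qbar P c \<alpha> r1 q1 u1 r q u"
    using dom by (auto simp: dominated_def)
  then interpret improvement P c qbar tlo thi \<alpha> r q u r1 q1 u1
    using \<open>\<alpha> < 1\<close> FR LC \<open>DD tlo thi P q\<close> by unfold_locales
  show ?thesis
    by (rule floor_randomized_improvement)
qed

end
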